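(* Fix $a\in\mathbb{R}$ and $r>0$, and let $k^{\rm opt}_0=a+\sqrt{a^2+1/r}$. For $T>0$ small enough that $aT<1$, let $k^{\rm opt}_T$ denote the minimizer of $J_T(k)=(1+rk^2)f_{a,T}(k)$ over $k\in(a,k_u(a,T))$. Then $$\lim_{T\to0^+}\frac{k^{\rm opt}_T}{k^{\rm opt}_0-\left(a\,k^{\rm opt}_0+\frac1r\right)T}=1 .$$
   Context: For real $a$ and $T>0$ with $aT<1$, $k_u(a,T)$ is the unique solution $k>|a|$ of $T\sqrt{k^2-a^2}=\arccos(a/k)$; the interval $(a,k_u(a,T))$ is exactly the set of real gains $k$ for which $\dot x(t)=ax(t)-kx(t-T)$ is exponentially stable. For such $k$, $f_{a,T}(k)=\int_{-\infty}^{+\infty}\left|j\omega-a+ke^{-jT\omega}\right|^{-2}d\omega$, the squared $\mathcal H_2$-norm of $1/(s-a+ke^{-Ts})$. $(1+rk^2)f_{a,T}(k)$ is the squared $\mathcal H_2$-norm from $v$ to $z=(x,\sqrt r\,u)$ for $\dot x=ax+u+v$, $u(t)=-kx(t-T)$. Note $k^{\rm opt}_0$ is the optimal gain of the delay-free ($T=0$) problem. *)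

theory Defs
  imports "HOL-Analysis.Analysis"
begin

definition k_u :: "real \<Rightarrow> real \<Rightarrow> real" where
  "k_u a T = (THE k. k > \<bar>a\<bar> \<and> T * sqrt (k\<^sup>2 - a\<^sup>2) = arccos (a / k))"

text \<open>Squared H2-norm of 1/(s - a + k e^(-Ts)).\<close>
definition f_aT :: "real \<Rightarrow> real \<Rightarrow> real \<Rightarrow> real" where
  "f_aT a T k = (LINT w|lborel.
     1 / (cmod (\<i> * complex_of_real w - complex_of_real a
                 + complex_of_real k * exp (- \<i> * complex_of_real (T * w))))\<^sup>2)"

definition J_T :: "real \<Rightarrow> real \<Rightarrow> real \<Rightarrow> real \<Rightarrow> real" where
  "J_T a r T k = (1 + r * k\<^sup>2) * f_aT a T k"

definition is_kopt :: "real \<Rightarrow> real \<Rightarrow> real \<Rightarrow> real \<Rightarrow> bool" where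
  "is_kopt a r T k \<longleftrightarrow> k \<in> {a<..<k_u a T} \<and>
     (\<forall>k'\<in>{a<..<k_u a T}. J_T a r T k \<le> J_T a r T k')"

end

theory Submission
  imports Defs
begin

text \<open>
  On the imaginary axis the characteristic function
  \<open>\<Delta>(i w) = i w - a + k e\<^sup>-\<^sup>i\<^sup>T\<^sup>w\<close> differs from its delay-free value \<open>k - a + i w\<close> by at
  most \<open>\<bar>k\<bar> T \<bar>k - a + i w\<bar>\<close>. Integrating against the Cauchy kernel
  \<open>\<integral> dw / ((k - a)\<^sup>2 + w\<^sup>2) = pi / (k - a)\<close> therefore pinches \<open>J_T(k)\<close> between
  \<open>J\<^sub>0(k) / (1 \<plusminus> \<bar>k\<bar> T)\<^sup>2\<close>, where \<open>J\<^sub>0(k) = pi (1 + r k\<^sup>2) / (k - a)\<close> is the delay-free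
  cost; it is minimal at \<open>k\<^sub>0\<^sup>o\<^sup>p\<^sup>t\<close>, with
  \<open>J\<^sub>0(k) - J\<^sub>0(k\<^sub>0\<^sup>o\<^sup>p\<^sup>t) = pi r (k - k\<^sub>0\<^sup>o\<^sup>p\<^sup>t)\<^sup>2 / (k - a)\<close>.

  Since \<open>k_u T \<le> \<bar>a\<bar> T + pi\<close>, the lower bound stays uniform on the whole stability
  interval (\<open>J\<^sub>0 \<le> 36 J_T\<close>), and as \<open>J\<^sub>0\<close> blows up at \<open>a\<close> and at infinity, every gain doing
  at least as well as \<open>k\<^sub>0\<^sup>o\<^sup>p\<^sup>t\<close> lies, for small \<open>T\<close>, in one fixed compact interval on
  which \<open>J_T\<close> is continuous. So minimizers exist, \<open>J\<^sub>0(k\<^sub>T\<^sup>o\<^sup>p\<^sup>t) \<rightarrow> J\<^sub>0(k\<^sub>0\<^sup>o\<^sup>p\<^sup>t)\<close>, and the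
  identity above forces \<open>k\<^sub>T\<^sup>o\<^sup>p\<^sup>t \<rightarrow> k\<^sub>0\<^sup>o\<^sup>p\<^sup>t\<close>. The denominator of the ratio, with its
  first-order correction in \<open>T\<close>, tends to \<open>k\<^sub>0\<^sup>o\<^sup>p\<^sup>t\<close> as well.
\<close>

lemma
  fixes c :: real
  assumes c: "c > 0"
  shows integrable_inverse_sq_plus_sq: "integrable lborel (\<lambda>w. 1 / (c\<^sup>2 + w\<^sup>2))"
    and integral_inverse_sq_plus_sq: "(LINT w|lborel. 1 / (c\<^sup>2 + w\<^sup>2)) = pi / c"
proof -
  let ?F = "\<lambda>x. arctan (x / c) / c"
  have deriv: "DERIV ?F x :> 1 / (c\<^sup>2 + x\<^sup>2)" for x
  proof -
    have "c * (c * (c * c)) + c * (c * (x * x)) > 0" using c by (simp add: add_pos_nonneg)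
    then show ?thesis
      using c by (auto intro!: derivative_eq_intros simp: field_simps power2_eq_square)
  qed
  have cont: "isCont (\<lambda>x. 1 / (c\<^sup>2 + x\<^sup>2)) x" for x
    using c by (auto intro!: continuous_intros simp: add_pos_nonneg)
  have "filterlim (\<lambda>x. (1 / c) * x) at_bot at_bot"
    by (rule filterlim_tendsto_pos_mult_at_bot[OF tendsto_const]) (use c in \<open>auto intro: filterlim_ident\<close>)
  moreover have "filterlim (\<lambda>x. (1 / c) * x) at_top at_top"
    by (rule filterlim_tendsto_pos_mult_at_top[OF tendsto_const]) (use c in \<open>auto intro: filterlim_ident\<close>)
  ultimately have scale_bot: "filterlim (\<lambda>x. x / c) at_bot at_bot"
    and scale_top: "filterlim (\<lambda>x. x / c) at_top at_top"
    by simp_all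
  have lim_bot: "((?F \<circ> real_of_ereal) \<longlongrightarrow> (- (pi / 2)) / c) (at_right (- \<infinity>))"
    unfolding ereal_tendsto_simps
    by (intro tendsto_divide tendsto_const filterlim_compose[OF tendsto_arctan_at_bot scale_bot])
       (use c in auto)
  have lim_top: "((?F \<circ> real_of_ereal) \<longlongrightarrow> (pi / 2) / c) (at_left \<infinity>)"
    unfolding ereal_tendsto_simps
    by (intro tendsto_divide tendsto_const filterlim_compose[OF tendsto_arctan_at_top scale_top])
       (use c in auto)
  have nonneg: "AE x in lborel. - \<infinity> < ereal x \<longrightarrow> ereal x < \<infinity> \<longrightarrow> 0 \<le> 1 / (c\<^sup>2 + x\<^sup>2)"
    by (auto simp: add_nonneg_nonneg)
  note FTC = interval_integral_FTC_nonneg[OF _ deriv cont nonneg lim_bot lim_top]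
  show "integrable lborel (\<lambda>w. 1 / (c\<^sup>2 + w\<^sup>2))"
    using FTC(1) by (simp add: set_integrable_def)
  show "(LINT w|lborel. 1 / (c\<^sup>2 + w\<^sup>2)) = pi / c"
    using FTC(2) by (simp add: interval_lebesgue_integral_def set_lebesgue_integral_def field_simps)
qed

lemma inverse_norm_sq_le:
  fixes z z0 :: "'a::real_normed_vector"
  assumes "norm (z - z0) \<le> e * norm z0" "e < 1" "z0 \<noteq> 0"
  shows "1 / (norm z)\<^sup>2 \<le> 1 / ((1 - e)\<^sup>2 * (norm z0)\<^sup>2)"
proof -
  have "(1 - e) * norm z0 \<le> norm z"
    using assms(1) norm_triangle_ineq2[of z0 z] by (simp add: norm_minus_commute algebra_simps)
  moreover have "0 < (1 - e) * norm z0" using assms by simp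
  ultimately have "((1 - e) * norm z0)\<^sup>2 \<le> (norm z)\<^sup>2" "0 < (norm z)\<^sup>2 * ((1 - e) * norm z0)\<^sup>2"
    by (auto intro!: power_mono mult_pos_pos)
  then have "1 / (norm z)\<^sup>2 \<le> 1 / ((1 - e) * norm z0)\<^sup>2" by (rule divide_left_mono[OF _ zero_le_one])
  then show ?thesis by (simp add: power_mult_distrib)
qed

lemma inverse_norm_sq_ge:
  fixes z z0 :: "'a::real_normed_vector"
  assumes "norm (z - z0) \<le> e * norm z0" "0 \<le> e" "z \<noteq> 0"
  shows "1 / ((1 + e)\<^sup>2 * (norm z0)\<^sup>2) \<le> 1 / (norm z)\<^sup>2"
proof -
  have "norm z \<le> (1 + e) * norm z0"
    using assms(1) norm_triangle_ineq[of "z - z0" z0] by (simp add: algebra_simps)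
  moreover have "z0 \<noteq> 0" using calculation assms(3) by auto
  ultimately have "(norm z)\<^sup>2 \<le> ((1 + e) * norm z0)\<^sup>2" "0 < (1 + e) * norm z0"
    using assms by (auto intro!: power_mono)
  then show ?thesis
    using assms(3) by (intro divide_left_mono mult_pos_pos) (auto simp: power_mult_distrib)
qed

lemma inverse_sq_diff_le:
  fixes A B m :: real
  assumes m: "0 < m" "m \<le> A" "m \<le> B"
  shows "\<bar>1 / A\<^sup>2 - 1 / B\<^sup>2\<bar> \<le> \<bar>A - B\<bar> * (2 / m ^ 3)"
proof -
  have "A > 0" "B > 0" using m by auto
  then have eq: "1 / A\<^sup>2 - 1 / B\<^sup>2 = (B - A) * (1 / (A * B\<^sup>2) + 1 / (A\<^sup>2 * B))"
    by (simp add: field_simps power2_eq_square)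
  have "m * (m * m) \<le> A * (B * B)" "(m * m) * m \<le> (A * A) * B"
    using m by (intro mult_mono; simp)+
  then have "m ^ 3 \<le> A * B\<^sup>2" "m ^ 3 \<le> A\<^sup>2 * B"
    by (simp_all add: power3_eq_cube power2_eq_square)
  then have "1 / (A * B\<^sup>2) \<le> 1 / m ^ 3" "1 / (A\<^sup>2 * B) \<le> 1 / m ^ 3"
    using m by (auto intro!: divide_left_mono)
  moreover have nonneg: "0 \<le> 1 / (A * B\<^sup>2) + 1 / (A\<^sup>2 * B)" using \<open>A > 0\<close> \<open>B > 0\<close> by simp
  ultimately have "\<bar>A - B\<bar> * (1 / (A * B\<^sup>2) + 1 / (A\<^sup>2 * B)) \<le> \<bar>A - B\<bar> * (2 / m ^ 3)"
    by (intro mult_left_mono) auto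
  with nonneg show ?thesis
    unfolding eq abs_mult by (simp add: abs_minus_commute)
qed

section \<open>The characteristic function on the imaginary axis\<close>

definition Delta :: "real \<Rightarrow> real \<Rightarrow> real \<Rightarrow> real \<Rightarrow> complex" where
  "Delta a T k w = \<i> * complex_of_real w - complex_of_real a
                   + complex_of_real k * exp (- \<i> * complex_of_real (T * w))"

lemma f_aT_eq_integral_Delta: "f_aT a T k = (LINT w|lborel. 1 / (cmod (Delta a T k w))\<^sup>2)"
  by (simp add: f_aT_def Delta_def)

lemma Delta_eq_Complex: "Delta a T k w = Complex (k * cos (T * w) - a) (w - k * sin (T * w))"
  by (simp add: Delta_def complex_eq_iff Re_exp Im_exp)

lemma continuous_on_Delta: "continuous_on UNIV (Delta a T k)"
  unfolding Delta_def by (intro continuous_intros)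

lemma borel_measurable_Delta [measurable]: "Delta a T k \<in> borel_measurable borel"
  by (rule borel_measurable_continuous_onI[OF continuous_on_Delta])

lemma norm_Delta_diff: "cmod (Delta a T k1 w - Delta a T k2 w) = \<bar>k1 - k2\<bar>"
proof -
  have "Delta a T k1 w - Delta a T k2 w = complex_of_real (k1 - k2) * exp (- \<i> * complex_of_real (T * w))"
    by (simp add: Delta_def algebra_simps)
  then show ?thesis by (simp add: norm_mult norm_exp del: of_real_diff)
qed

lemma norm_Delta_ge: "\<bar>w\<bar> - \<bar>k\<bar> \<le> cmod (Delta a T k w)"
proof -
  have "\<bar>k * sin (T * w)\<bar> \<le> \<bar>k\<bar>" by (simp add: abs_mult mult_left_le)
  moreover have "\<bar>w - k * sin (T * w)\<bar> \<le> cmod (Delta a T k w)"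
    using abs_Im_le_cmod[of "Delta a T k w"] by (simp add: Delta_eq_Complex)
  ultimately show ?thesis by linarith
qed

lemma norm_exp_i_minus_1_le: "cmod (exp (\<i> * complex_of_real x) - 1) \<le> \<bar>x\<bar>"
  using abs_sin_x_le_abs_x[of "x / 2"] by (simp add: dist_exp_i_1)

lemma norm_Delta_minus_delay_free:
  assumes "T \<ge> 0"
  shows "cmod (Delta a T k w - Complex (k - a) w) \<le> \<bar>k\<bar> * T * cmod (Complex (k - a) w)"
proof -
  have "Delta a T k w - Complex (k - a) w
      = complex_of_real k * (exp (\<i> * complex_of_real (- (T * w))) - 1)"
    by (simp add: Delta_def complex_eq_iff algebra_simps)
  then have "cmod (Delta a T k w - Complex (k - a) w) \<le> \<bar>k\<bar> * \<bar>T * w\<bar>"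
    using norm_exp_i_minus_1_le[of "- (T * w)"] by (simp add: norm_mult mult_left_mono)
  also have "\<dots> \<le> \<bar>k\<bar> * T * cmod (Complex (k - a) w)"
    using assms abs_Im_le_cmod[of "Complex (k - a) w"]
    by (simp add: abs_mult mult.assoc mult_left_mono)
  finally show ?thesis .
qed

lemma norm_Complex_sq: "(cmod (Complex x y))\<^sup>2 = x\<^sup>2 + y\<^sup>2"
  by (simp add: cmod_def)

section \<open>The stability limit \<open>k_u\<close>\<close>

definition phase_gap :: "real \<Rightarrow> real \<Rightarrow> real \<Rightarrow> real" where
  "phase_gap a T k = T * sqrt (k\<^sup>2 - a\<^sup>2) - arccos (a / k)"

lemma k_u_eq_The: "k_u a T = (THE k. \<bar>a\<bar> < k \<and> phase_gap a T k = 0)"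
  by (simp add: k_u_def phase_gap_def)

lemma abs_less_imp_sq_less: "\<bar>a\<bar> < (k::real) \<Longrightarrow> a\<^sup>2 < k\<^sup>2"
  by (metis abs_ge_zero power2_abs power_strict_mono zero_less_numeral)

lemma sqrt_one_minus_sq_div:
  assumes "k > 0"
  shows "sqrt (1 - (a / k)\<^sup>2) = sqrt (k\<^sup>2 - a\<^sup>2) / k"
proof -
  have "1 - (a / k)\<^sup>2 = (k\<^sup>2 - a\<^sup>2) / k\<^sup>2" using assms by (simp add: field_simps power2_eq_square)
  then show ?thesis using assms by (simp add: real_sqrt_divide)
qed

text \<open>With \<open>\<theta> = arccos (a / k)\<close> one has \<open>sqrt (k\<^sup>2 - a\<^sup>2) = k sin \<theta>\<close>, so the
  delay phase is \<open>k T sin \<theta> < sin \<theta> \<le> \<theta>\<close>.\<close>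
lemma phase_gap_neg:
  assumes T: "T > 0" and k: "\<bar>a\<bar> < k" and kT: "k * T < 1"
  shows "phase_gap a T k < 0"
proof -
  define \<theta> where "\<theta> = arccos (a / k)"
  have kpos: "k > 0" using k by linarith
  have ak: "- 1 \<le> a / k" "a / k \<le> 1" using k by (auto simp: divide_le_eq le_divide_eq)
  have sin_eq: "sin \<theta> = sqrt (k\<^sup>2 - a\<^sup>2) / k"
    using ak kpos by (simp add: \<theta>_def sin_arccos sqrt_one_minus_sq_div)
  then have sqrt_eq: "sqrt (k\<^sup>2 - a\<^sup>2) = k * sin \<theta>" using kpos by (simp add: field_simps)
  have "sin \<theta> > 0" using sin_eq abs_less_imp_sq_less[OF k] kpos by simp
  then have "T * sqrt (k\<^sup>2 - a\<^sup>2) < sin \<theta>"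
    using kT by (simp add: sqrt_eq mult.assoc [symmetric] mult.commute[of T])
  also have "sin \<theta> \<le> \<theta>" using ak by (intro sin_x_le_x) (simp add: \<theta>_def arccos_lbound)
  finally show ?thesis by (simp add: phase_gap_def \<theta>_def)
qed

lemma has_real_derivative_phase_gap:
  assumes k: "\<bar>a\<bar> < k"
  shows "(phase_gap a T has_real_derivative (T * k\<^sup>2 - a) / (k * sqrt (k\<^sup>2 - a\<^sup>2))) (at k)"
proof -
  have kpos: "k > 0" using k by linarith
  have a2: "a\<^sup>2 < k\<^sup>2" using abs_less_imp_sq_less[OF k] .
  have ak: "- 1 < a / k" "a / k < 1" using k kpos by (auto simp: divide_less_eq less_divide_eq)
  have sp: "sqrt (k\<^sup>2 - a\<^sup>2) > 0" using a2 by simp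
  have d1: "DERIV (\<lambda>k. a / k) k :> - (a / k\<^sup>2)"
    using kpos by (auto intro!: derivative_eq_intros simp: power2_eq_square field_simps)
  have d2: "DERIV (\<lambda>k. arccos (a / k)) k :> inverse (- sqrt (1 - (a / k)\<^sup>2)) * (- (a / k\<^sup>2))"
    by (rule DERIV_chain2[OF DERIV_arccos d1]) (use ak in auto)
  have d3: "DERIV (\<lambda>k. sqrt (k\<^sup>2 - a\<^sup>2)) k :> inverse (sqrt (k\<^sup>2 - a\<^sup>2)) / 2 * (2 * k)"
    by (rule DERIV_chain2[OF DERIV_real_sqrt]) (use a2 in \<open>auto intro!: derivative_eq_intros\<close>)
  have "DERIV (phase_gap a T) k :> T * (inverse (sqrt (k\<^sup>2 - a\<^sup>2)) / 2 * (2 * k))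
      - inverse (- sqrt (1 - (a / k)\<^sup>2)) * (- (a / k\<^sup>2))"
    unfolding phase_gap_def by (intro DERIV_diff DERIV_cmult d2 d3)
  moreover have "T * (inverse (sqrt (k\<^sup>2 - a\<^sup>2)) / 2 * (2 * k))
      - inverse (- sqrt (1 - (a / k)\<^sup>2)) * (- (a / k\<^sup>2))
      = (T * k\<^sup>2 - a) / (k * sqrt (k\<^sup>2 - a\<^sup>2))"
    unfolding sqrt_one_minus_sq_div[OF kpos] using kpos sp by (simp add: field_simps power2_eq_square)
  ultimately show ?thesis by simp
qed

lemma isCont_phase_gap: "\<bar>a\<bar> < k \<Longrightarrow> isCont (phase_gap a T) k"
  by (rule DERIV_isCont[OF has_real_derivative_phase_gap])

lemma phase_gap_strict_mono:
  assumes T: "T > 0" and aT: "\<bar>a\<bar> * T < 1" and k1: "1 / T \<le> k1" and k12: "k1 < k2"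
  shows "phase_gap a T k1 < phase_gap a T k2"
proof (rule DERIV_pos_imp_increasing[OF k12])
  fix x assume x: "k1 \<le> x" "x \<le> k2"
  have "\<bar>a\<bar> < 1 / T" using aT T by (simp add: less_divide_eq)
  then have xa: "\<bar>a\<bar> < x" using k1 x by linarith
  have "1 \<le> k1 * T" using k1 T by (simp add: divide_le_eq)
  also have "\<dots> \<le> x * T" using x T by (simp add: mult_right_mono)
  finally have "x * 1 \<le> x * (x * T)" using xa by (intro mult_left_mono) auto
  then have "x \<le> T * x\<^sup>2" by (simp add: power2_eq_square algebra_simps)
  then have "(T * x\<^sup>2 - a) / (x * sqrt (x\<^sup>2 - a\<^sup>2)) > 0"
    using xa abs_less_imp_sq_less[OF xa] by (intro divide_pos_pos mult_pos_pos) auto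
  then show "\<exists>y. DERIV (phase_gap a T) x :> y \<and> y > 0"
    using has_real_derivative_phase_gap[OF xa] by blast
qed

lemma phase_gap_root_ge:
  assumes "T > 0" "\<bar>a\<bar> < k" "phase_gap a T k = 0"
  shows "1 / T \<le> k"
  using phase_gap_neg[OF assms(1,2)] assms by (force simp: divide_le_eq mult.commute)

lemma phase_gap_root_exists:
  assumes T: "T > 0" and aT: "\<bar>a\<bar> * T < 1"
  shows "\<exists>k. \<bar>a\<bar> < k \<and> phase_gap a T k = 0"
proof -
  define k1 where "k1 = (\<bar>a\<bar> + 1 / T) / 2"
  have "\<bar>a\<bar> < 1 / T" using aT T by (simp add: less_divide_eq)
  then have k1: "\<bar>a\<bar> < k1" "k1 < 1 / T" by (auto simp: k1_def)
  have k1T: "k1 * T < 1" using k1(2) T by (simp add: less_divide_eq)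
  define k2 where "k2 = sqrt (a\<^sup>2 + (4 / T)\<^sup>2)"
  have "sqrt (a\<^sup>2) < k2" unfolding k2_def using T by (intro real_sqrt_less_mono) simp
  moreover have "sqrt ((4 / T)\<^sup>2) \<le> k2" unfolding k2_def by (intro real_sqrt_le_mono) simp
  ultimately have k2: "\<bar>a\<bar> < k2" "4 / T \<le> k2" using T by simp_all
  have "1 / T < 4 / T" using T by (simp add: divide_strict_right_mono)
  then have k12: "k1 < k2" using k1(2) k2(2) by linarith
  have "T * sqrt (k2\<^sup>2 - a\<^sup>2) = 4" using T by (simp add: k2_def add_nonneg_nonneg)
  moreover have "arccos (a / k2) \<le> pi"
    using k2 by (intro arccos_ubound) (auto simp: divide_le_eq le_divide_eq)
  ultimately have "phase_gap a T k2 > 0" using pi_less_4 by (simp add: phase_gap_def)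
  moreover have "phase_gap a T k1 < 0" using phase_gap_neg[OF T k1(1) k1T] .
  moreover have "continuous_on {k1..k2} (phase_gap a T)"
    using k1(1) by (intro continuous_at_imp_continuous_on ballI isCont_phase_gap) auto
  ultimately obtain k where "k1 \<le> k" "k \<le> k2" "phase_gap a T k = 0"
    using IVT'[of "phase_gap a T" k1 0 k2] k12 by auto
  then show ?thesis using k1 by (intro exI[of _ k]) auto
qed

lemma ex1_phase_gap_root:
  assumes T: "T > 0" and aT: "\<bar>a\<bar> * T < 1"
  shows "\<exists>!k. \<bar>a\<bar> < k \<and> phase_gap a T k = 0"
proof (rule ex_ex1I)
  show "\<exists>k. \<bar>a\<bar> < k \<and> phase_gap a T k = 0" using phase_gap_root_exists[OF assms] .
  fix k k' assume k: "\<bar>a\<bar> < k \<and> phase_gap a T k = 0" and k': "\<bar>a\<bar> < k' \<and> phase_gap a T k' = 0"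
  then have "1 / T \<le> k" "1 / T \<le> k'" using phase_gap_root_ge[OF T] by auto
  then show "k = k'"
    using k k' phase_gap_strict_mono[OF T aT, of k k'] phase_gap_strict_mono[OF T aT, of k' k]
    by (cases k k' rule: linorder_cases) auto
qed

lemma
  assumes "T > 0" "\<bar>a\<bar> * T < 1"
  shows abs_less_k_u: "\<bar>a\<bar> < k_u a T"
    and phase_gap_k_u: "phase_gap a T (k_u a T) = 0"
  using theI'[OF ex1_phase_gap_root[OF assms]] by (simp_all add: k_u_eq_The)

lemma k_u_ge:
  assumes "T > 0" "\<bar>a\<bar> * T < 1"
  shows "1 / T \<le> k_u a T"
  using phase_gap_root_ge[OF assms(1) abs_less_k_u[OF assms] phase_gap_k_u[OF assms]] .

lemma k_u_le:
  assumes T: "T > 0" and aT: "\<bar>a\<bar> * T < 1"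
  shows "k_u a T * T \<le> \<bar>a\<bar> * T + pi"
proof -
  let ?k = "k_u a T"
  define \<beta> where "\<beta> = sqrt (?k\<^sup>2 - a\<^sup>2)"
  have ka: "\<bar>a\<bar> < ?k" using abs_less_k_u[OF T aT] .
  have "T * \<beta> = arccos (a / ?k)" using phase_gap_k_u[OF T aT] by (simp add: phase_gap_def \<beta>_def)
  also have "\<dots> \<le> pi" using ka by (intro arccos_ubound) (auto simp: divide_le_eq le_divide_eq)
  finally have "T * \<beta> \<le> pi" .
  have a2: "0 \<le> ?k\<^sup>2 - a\<^sup>2" using abs_less_imp_sq_less[OF ka] by linarith
  then have "\<beta> \<ge> 0" "\<beta>\<^sup>2 = ?k\<^sup>2 - a\<^sup>2" unfolding \<beta>_def by (rule real_sqrt_ge_zero, rule real_sqrt_pow2)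
  then have "?k\<^sup>2 = a\<^sup>2 + \<beta>\<^sup>2" by simp
  also have "\<dots> \<le> (\<bar>a\<bar> + \<beta>)\<^sup>2" using \<open>\<beta> \<ge> 0\<close> by (simp add: power2_sum)
  finally have "?k \<le> \<bar>a\<bar> + \<beta>" by (rule power2_le_imp_le) (use \<open>\<beta> \<ge> 0\<close> in simp)
  then have "?k * T \<le> (\<bar>a\<bar> + \<beta>) * T" using T by (intro mult_right_mono) auto
  with \<open>T * \<beta> \<le> pi\<close> show ?thesis by (simp add: algebra_simps)
qed

lemma phase_gap_neg_below_k_u:
  assumes T: "T > 0" and aT: "\<bar>a\<bar> * T < 1" and k: "\<bar>a\<bar> < k" "k < k_u a T"
  shows "phase_gap a T k < 0"
proof (cases "k * T < 1")
  case True
  then show ?thesis using phase_gap_neg[OF T k(1)] by simp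
next
  case False
  then have "1 / T \<le> k" using T by (simp add: divide_le_eq mult.commute)
  then show ?thesis using phase_gap_strict_mono[OF T aT _ k(2)] phase_gap_k_u[OF T aT] by simp
qed

text \<open>A zero \<open>w\<close> would give \<open>k\<^sup>2 = a\<^sup>2 + w\<^sup>2\<close> and \<open>cos (T \<bar>w\<bar>) = a / k\<close>, i.e.\ a root of
  \<open>phase_gap\<close> below \<open>k_u\<close>.\<close>
lemma Delta_nonzero:
  assumes T: "T > 0" and aT: "\<bar>a\<bar> * T < 1" and k: "a < k" "k < k_u a T"
  shows "Delta a T k w \<noteq> 0"
proof
  assume "Delta a T k w = 0"
  then have re: "k * cos (T * w) = a" and im: "k * sin (T * w) = w"
    by (auto simp: Delta_eq_Complex complex_eq_iff)
  have "w \<noteq> 0" using re k by auto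
  have "k\<^sup>2 = (k * cos (T * w))\<^sup>2 + (k * sin (T * w))\<^sup>2"
    by (simp add: power_mult_distrib flip: distrib_left)
  then have kk: "k\<^sup>2 = a\<^sup>2 + w\<^sup>2" using re im by simp
  then have "\<bar>a\<bar>\<^sup>2 < \<bar>k\<bar>\<^sup>2" using \<open>w \<noteq> 0\<close> by simp
  then have "\<bar>a\<bar> < \<bar>k\<bar>" by (rule power_less_imp_less_base) simp
  then have ka: "\<bar>a\<bar> < k" using k by auto
  have "cos (T * \<bar>w\<bar>) = a / k" using re ka by (cases "w \<ge> 0") (auto simp: field_simps)
  moreover have "sqrt (k\<^sup>2 - a\<^sup>2) = \<bar>w\<bar>" using kk by simp
  ultimately have lt: "T * \<bar>w\<bar> < arccos (cos (T * \<bar>w\<bar>))"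
    using phase_gap_neg_below_k_u[OF T aT ka k(2)] by (simp add: phase_gap_def)
  moreover have "arccos (cos (T * \<bar>w\<bar>)) \<le> pi" by (simp add: arccos_ubound)
  ultimately have "arccos (cos (T * \<bar>w\<bar>)) = T * \<bar>w\<bar>" using T by (intro arccos_cos) auto
  with lt show False by simp
qed

section \<open>Two-sided bounds on \<open>f_aT\<close>\<close>

lemma inverse_norm_sq_le_Cauchy_kernel:
  fixes h :: "real \<Rightarrow> 'a::real_normed_vector"
  assumes cont: "continuous_on UNIV h" and nz: "\<And>w. h w \<noteq> 0"
    and grow: "\<And>w. \<bar>w\<bar> - C \<le> norm (h w)"
  obtains M where "M > 0" "\<And>w. 1 / (norm (h w))\<^sup>2 \<le> M * (1 / (1 + w\<^sup>2))"
proof -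
  define R where "R = 2 * \<bar>C\<bar> + 1"
  have "continuous_on (cball 0 R) (\<lambda>w. norm (h w))"
    by (intro continuous_on_norm continuous_on_subset[OF cont]) auto
  moreover have "cball (0::real) R \<noteq> {}" by (simp add: R_def)
  ultimately obtain w0 where min: "\<And>w. w \<in> cball 0 R \<Longrightarrow> norm (h w0) \<le> norm (h w)"
    using continuous_attains_inf[OF compact_cball] by blast
  define m where "m = norm (h w0)"
  have m: "m > 0" using nz by (simp add: m_def)
  define M where "M = 8 + (1 + R\<^sup>2) / m\<^sup>2"
  have bound: "1 / (norm (h w))\<^sup>2 \<le> M * (1 / (1 + w\<^sup>2))" for w
  proof (cases "\<bar>w\<bar> \<le> R")
    case True
    then have "m\<^sup>2 \<le> (norm (h w))\<^sup>2" using min[of w] m by (intro power_mono) (auto simp: m_def)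
    then have "1 / (norm (h w))\<^sup>2 \<le> 1 / m\<^sup>2" using m nz[of w] by (intro divide_left_mono) auto
    also have "\<dots> \<le> (1 + R\<^sup>2) / m\<^sup>2 * (1 / (1 + w\<^sup>2))"
    proof -
      have "\<bar>w\<bar>\<^sup>2 \<le> R\<^sup>2" using True by (intro power_mono) auto
      then show ?thesis using m by (simp add: field_simps add_pos_nonneg)
    qed
    also have "\<dots> \<le> M * (1 / (1 + w\<^sup>2))"
      unfolding M_def by (intro mult_right_mono) (auto simp: add_pos_nonneg)
    finally show ?thesis .
  next
    case False
    then have w: "\<bar>w\<bar> / 2 \<le> norm (h w)" "1 \<le> \<bar>w\<bar>" using grow[of w] by (auto simp: R_def)
    then have "(\<bar>w\<bar> / 2)\<^sup>2 \<le> (norm (h w))\<^sup>2" by (intro power_mono) auto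
    then have "1 / (norm (h w))\<^sup>2 \<le> 1 / (\<bar>w\<bar> / 2)\<^sup>2"
      using w nz[of w] by (intro divide_left_mono) auto
    also have "\<dots> = 4 / w\<^sup>2" by (simp add: power_divide)
    also have "\<dots> \<le> 8 * (1 / (1 + w\<^sup>2))"
      using w one_le_power[OF w(2), of 2] by (simp add: field_simps)
    also have "\<dots> \<le> M * (1 / (1 + w\<^sup>2))"
      unfolding M_def by (intro mult_right_mono) (auto simp: add_pos_nonneg)
    finally show ?thesis .
  qed
  moreover have "M > 0" using m by (simp add: M_def add_pos_nonneg)
  ultimately show thesis using that by blast
qed

lemma integrable_inverse_norm_sq:
  fixes h :: "real \<Rightarrow> 'a::real_normed_vector"
  assumes cont: "continuous_on UNIV h" and "\<And>w. h w \<noteq> 0" "\<And>w. \<bar>w\<bar> - C \<le> norm (h w)"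
  shows "integrable lborel (\<lambda>w. 1 / (norm (h w))\<^sup>2)"
proof -
  obtain M where M: "M > 0" "\<And>w. 1 / (norm (h w))\<^sup>2 \<le> M * (1 / (1 + w\<^sup>2))"
    using inverse_norm_sq_le_Cauchy_kernel[OF assms] by blast
  have [measurable]: "h \<in> borel_measurable borel" by (rule borel_measurable_continuous_onI[OF cont])
  have "integrable lborel (\<lambda>w. M * (1 / (1 + w\<^sup>2)))"
    using integrable_mult_right[OF integrable_inverse_sq_plus_sq[of 1]] by simp
  then show ?thesis
    by (rule Bochner_Integration.integrable_bound) (use M in \<open>auto simp: add_pos_nonneg\<close>)
qed

lemma integrable_inverse_norm_Delta_sq:
  assumes "T > 0" "\<bar>a\<bar> * T < 1" "a < k" "k < k_u a T"
  shows "integrable lborel (\<lambda>w. 1 / (cmod (Delta a T k w))\<^sup>2)"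
  using integrable_inverse_norm_sq[OF continuous_on_Delta Delta_nonzero[OF assms] norm_Delta_ge] .

lemma
  assumes T: "T \<ge> 0" and k: "a < k" and kT: "\<bar>k\<bar> * T < 1"
  shows integrable_inverse_norm_Delta_sq_small_delay:
      "integrable lborel (\<lambda>w. 1 / (cmod (Delta a T k w))\<^sup>2)"
    and f_aT_le: "f_aT a T k \<le> pi / ((1 - \<bar>k\<bar> * T)\<^sup>2 * (k - a))"
proof -
  have pointwise: "1 / (cmod (Delta a T k w))\<^sup>2 \<le> 1 / (1 - \<bar>k\<bar> * T)\<^sup>2 * (1 / ((k - a)\<^sup>2 + w\<^sup>2))" for w
    using inverse_norm_sq_le[OF norm_Delta_minus_delay_free[OF T] kT] k
    by (simp add: norm_Complex_sq complex_eq_iff)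
  have I: "integrable lborel (\<lambda>w. 1 / (1 - \<bar>k\<bar> * T)\<^sup>2 * (1 / ((k - a)\<^sup>2 + w\<^sup>2)))"
    using k by (intro integrable_mult_right integrable_inverse_sq_plus_sq) simp
  show int: "integrable lborel (\<lambda>w. 1 / (cmod (Delta a T k w))\<^sup>2)"
    by (rule Bochner_Integration.integrable_bound[OF I]) (use pointwise in auto)
  have "f_aT a T k \<le> (LINT w|lborel. 1 / (1 - \<bar>k\<bar> * T)\<^sup>2 * (1 / ((k - a)\<^sup>2 + w\<^sup>2)))"
    unfolding f_aT_eq_integral_Delta by (rule integral_mono[OF int I pointwise])
  also have "\<dots> = 1 / (1 - \<bar>k\<bar> * T)\<^sup>2 * (pi / (k - a))"
    using k by (simp only: integral_mult_right_zero integral_inverse_sq_plus_sq diff_gt_0_iff_gt)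
  finally show "f_aT a T k \<le> pi / ((1 - \<bar>k\<bar> * T)\<^sup>2 * (k - a))" by simp
qed

lemma f_aT_ge:
  assumes T: "T \<ge> 0" and k: "a < k" and nz: "\<And>w. Delta a T k w \<noteq> 0"
    and int: "integrable lborel (\<lambda>w. 1 / (cmod (Delta a T k w))\<^sup>2)"
  shows "pi / ((1 + \<bar>k\<bar> * T)\<^sup>2 * (k - a)) \<le> f_aT a T k"
proof -
  have pointwise: "1 / (1 + \<bar>k\<bar> * T)\<^sup>2 * (1 / ((k - a)\<^sup>2 + w\<^sup>2)) \<le> 1 / (cmod (Delta a T k w))\<^sup>2" for w
    using inverse_norm_sq_ge[OF norm_Delta_minus_delay_free[OF T] _ nz] T by (simp add: norm_Complex_sq)
  have I: "integrable lborel (\<lambda>w. 1 / (1 + \<bar>k\<bar> * T)\<^sup>2 * (1 / ((k - a)\<^sup>2 + w\<^sup>2)))"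
    using k by (intro integrable_mult_right integrable_inverse_sq_plus_sq) simp
  have "1 / (1 + \<bar>k\<bar> * T)\<^sup>2 * (pi / (k - a)) = (LINT w|lborel. 1 / (1 + \<bar>k\<bar> * T)\<^sup>2 * (1 / ((k - a)\<^sup>2 + w\<^sup>2)))"
    using k by (simp only: integral_mult_right_zero integral_inverse_sq_plus_sq diff_gt_0_iff_gt)
  also have "\<dots> \<le> f_aT a T k"
    unfolding f_aT_eq_integral_Delta by (rule integral_mono[OF I int pointwise])
  finally show ?thesis by simp
qed

lemma inverse_norm_Delta_sq_diff_le:
  assumes T: "T \<ge> 0" and d: "\<delta> > 0"
    and k1: "a + \<delta> \<le> k1" "\<bar>k1\<bar> * T \<le> 1 / 2" and k2: "a + \<delta> \<le> k2" "\<bar>k2\<bar> * T \<le> 1 / 2"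
  shows "1 / (cmod (Delta a T k1 w))\<^sup>2 - 1 / (cmod (Delta a T k2 w))\<^sup>2
    \<le> \<bar>k1 - k2\<bar> * (16 / \<delta> * (1 / (\<delta>\<^sup>2 + w\<^sup>2)))"
proof -
  define q where "q = sqrt (\<delta>\<^sup>2 + w\<^sup>2)"
  have q: "\<delta> \<le> q" "q\<^sup>2 = \<delta>\<^sup>2 + w\<^sup>2" unfolding q_def by (auto simp: real_le_rsqrt)
  have lower: "q / 2 \<le> cmod (Delta a T k w)" if "a + \<delta> \<le> k" "\<bar>k\<bar> * T \<le> 1 / 2" for k
  proof -
    have "\<delta>\<^sup>2 \<le> (k - a)\<^sup>2" using that d by (intro power_mono) auto
    then have "q \<le> cmod (Complex (k - a) w)" by (simp add: q_def cmod_def)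
    moreover have "cmod (Complex (k - a) w) - cmod (Delta a T k w) \<le> 1 / 2 * cmod (Complex (k - a) w)"
      using norm_Delta_minus_delay_free[OF T, of a k w] norm_triangle_ineq3[of "Complex (k - a) w" "Delta a T k w"]
        mult_right_mono[OF that(2) norm_ge_zero[of "Complex (k - a) w"]]
      by (simp add: norm_minus_commute)
    ultimately show ?thesis by linarith
  qed
  have "\<bar>1 / (cmod (Delta a T k1 w))\<^sup>2 - 1 / (cmod (Delta a T k2 w))\<^sup>2\<bar>
      \<le> \<bar>cmod (Delta a T k1 w) - cmod (Delta a T k2 w)\<bar> * (2 / (q / 2) ^ 3)"
    using q d lower[OF k1] lower[OF k2] by (intro inverse_sq_diff_le) auto
  also have "\<dots> \<le> \<bar>k1 - k2\<bar> * (2 / (q / 2) ^ 3)"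
    using norm_triangle_ineq3[of "Delta a T k1 w" "Delta a T k2 w"] q d
    by (intro mult_right_mono) (auto simp: norm_Delta_diff)
  also have "2 / (q / 2) ^ 3 \<le> 16 / \<delta> * (1 / (\<delta>\<^sup>2 + w\<^sup>2))"
  proof -
    have "2 / (q / 2) ^ 3 = 16 / (q * q\<^sup>2)" by (simp add: power3_eq_cube power2_eq_square)
    also have "\<dots> \<le> 16 / (\<delta> * q\<^sup>2)"
      using q(1) d by (intro divide_left_mono mult_right_mono mult_pos_pos) auto
    finally show ?thesis using q by simp
  qed
  then have "\<bar>k1 - k2\<bar> * (2 / (q / 2) ^ 3) \<le> \<bar>k1 - k2\<bar> * (16 / \<delta> * (1 / (\<delta>\<^sup>2 + w\<^sup>2)))"
    by (intro mult_left_mono) auto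
  finally show ?thesis by linarith
qed

lemma lipschitz_on_f_aT:
  assumes T: "T \<ge> 0" and d: "\<delta> > 0" and S: "\<And>k. k \<in> S \<Longrightarrow> a + \<delta> \<le> k \<and> \<bar>k\<bar> * T \<le> 1 / 2"
  shows "(16 / \<delta> * (pi / \<delta>))-lipschitz_on S (f_aT a T)"
proof (rule lipschitz_onI)
  have diff_le: "f_aT a T k1 - f_aT a T k2 \<le> \<bar>k1 - k2\<bar> * (16 / \<delta> * (pi / \<delta>))"
    if "k1 \<in> S" "k2 \<in> S" for k1 k2
  proof -
    note k1 = S[OF that(1)] and k2 = S[OF that(2)]
    have int: "integrable lborel (\<lambda>w. 1 / (cmod (Delta a T k w))\<^sup>2)" if "a + \<delta> \<le> k" "\<bar>k\<bar> * T \<le> 1 / 2" for k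
      using that d by (intro integrable_inverse_norm_Delta_sq_small_delay[OF T]) auto
    have I: "integrable lborel (\<lambda>w. \<bar>k1 - k2\<bar> * (16 / \<delta> * (1 / (\<delta>\<^sup>2 + w\<^sup>2))))"
      using d by (intro integrable_mult_right integrable_inverse_sq_plus_sq)
    have "f_aT a T k1 - f_aT a T k2
        = (LINT w|lborel. 1 / (cmod (Delta a T k1 w))\<^sup>2 - 1 / (cmod (Delta a T k2 w))\<^sup>2)"
      unfolding f_aT_eq_integral_Delta using k1 k2
      by (intro Bochner_Integration.integral_diff[symmetric] int) auto
    also have "\<dots> \<le> (LINT w|lborel. \<bar>k1 - k2\<bar> * (16 / \<delta> * (1 / (\<delta>\<^sup>2 + w\<^sup>2))))"
      using k1 k2 by (intro integral_mono Bochner_Integration.integrable_diff int I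
          inverse_norm_Delta_sq_diff_le[OF T d]) auto
    also have "\<dots> = \<bar>k1 - k2\<bar> * (16 / \<delta> * (pi / \<delta>))"
      using d by (simp only: integral_mult_right_zero integral_inverse_sq_plus_sq)
    finally show ?thesis .
  qed
  fix x y assume "x \<in> S" "y \<in> S"
  from diff_le[OF this] diff_le[OF this(2,1)]
  show "dist (f_aT a T x) (f_aT a T y) \<le> 16 / \<delta> * (pi / \<delta>) * dist x y"
    by (simp add: dist_real_def abs_minus_commute mult.commute abs_le_iff)
qed (use d in simp)

lemma continuous_on_J_T:
  assumes "T \<ge> 0" "a < L" "\<And>k. k \<in> {L..U} \<Longrightarrow> \<bar>k\<bar> * T \<le> 1 / 2"
  shows "continuous_on {L..U} (J_T a r T)"
proof -
  have "continuous_on {L..U} (f_aT a T)"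
    by (rule lipschitz_on_continuous_on[OF lipschitz_on_f_aT[of T "L - a"]]) (use assms in auto)
  then show ?thesis unfolding J_T_def[abs_def] by (intro continuous_intros)
qed

section \<open>Optimal gains for small delays\<close>

text \<open>The delay-free cost: by the Cauchy integral, \<open>f_aT a 0 k = pi / (k - a)\<close>.\<close>
definition J0 :: "real \<Rightarrow> real \<Rightarrow> real \<Rightarrow> real" where
  "J0 a r k = pi * (1 + r * k\<^sup>2) / (k - a)"

definition kopt0 :: "real \<Rightarrow> real \<Rightarrow> real" where
  "kopt0 a r = a + sqrt (a\<^sup>2 + 1 / r)"

lemma J0_pos: "r \<ge> 0 \<Longrightarrow> a < k \<Longrightarrow> 0 < J0 a r k"
  by (simp add: J0_def add_pos_nonneg)

lemma
  assumes "r > 0"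
  shows kopt0_gt: "a < kopt0 a r" and kopt0_pos: "0 < kopt0 a r"
proof -
  have "sqrt (a\<^sup>2) < sqrt (a\<^sup>2 + 1 / r)" using assms by (intro real_sqrt_less_mono) simp
  then have "- sqrt (a\<^sup>2 + 1 / r) < a" "a < sqrt (a\<^sup>2 + 1 / r)" by (simp_all add: abs_less_iff)
  then show "a < kopt0 a r" "0 < kopt0 a r" unfolding kopt0_def by linarith+
qed

lemma J0_minus_J0_kopt0:
  assumes r: "r > 0" and k: "a < k"
  shows "J0 a r k - J0 a r (kopt0 a r) = pi * r * (k - kopt0 a r)\<^sup>2 / (k - a)"
proof -
  define s where "s = sqrt (a\<^sup>2 + 1 / r)"
  have "s\<^sup>2 = a\<^sup>2 + 1 / r" using r by (simp add: s_def add_nonneg_nonneg)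
  then have rs: "r * s\<^sup>2 = r * a\<^sup>2 + 1" using r by (simp add: field_simps)
  have s: "s > 0" using kopt0_gt[OF r, of a] by (simp add: kopt0_def s_def)
  have eq: "(1 + r * k\<^sup>2) * s - (1 + r * (a + s)\<^sup>2) * (k - a) = r * s * (k - (a + s))\<^sup>2"
    using rs by algebra
  have ka: "k - a \<noteq> 0" using k by simp
  have "J0 a r k - J0 a r (kopt0 a r) = pi * (1 + r * k\<^sup>2) / (k - a) - pi * (1 + r * (a + s)\<^sup>2) / s"
    by (simp add: J0_def kopt0_def s_def)
  also have "\<dots> = pi * ((1 + r * k\<^sup>2) * s - (1 + r * (a + s)\<^sup>2) * (k - a)) / ((k - a) * s)"
    using s ka by (simp add: diff_frac_eq algebra_simps)
  also have "\<dots> = pi * r * (k - (a + s))\<^sup>2 / (k - a)"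
    using s ka by (simp only: eq) simp
  finally show ?thesis by (simp add: kopt0_def s_def)
qed

lemma J0_kopt0_le:
  assumes "r > 0" "a < k"
  shows "J0 a r (kopt0 a r) \<le> J0 a r k"
proof -
  have "0 \<le> pi * r * (k - kopt0 a r)\<^sup>2 / (k - a)" using assms by simp
  then show ?thesis using J0_minus_J0_kopt0[OF assms] by linarith
qed

lemma J0_sublevel:
  assumes r: "r > 0" and k: "a < k" and B: "J0 a r k \<le> B"
  shows "a + pi / B \<le> k" "k \<le> \<bar>a\<bar> + 2 * B / (pi * r)"
proof -
  have Bpos: "B > 0" using J0_pos[of r a k] r k B by linarith
  have "pi / (k - a) \<le> J0 a r k"
    unfolding J0_def using r k by (intro divide_right_mono) auto
  then have "pi \<le> (k - a) * J0 a r k" using k by (simp add: divide_le_eq mult.commute)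
  also have "\<dots> \<le> (k - a) * B" using B k by (intro mult_left_mono) auto
  finally have "pi / B \<le> k - a" using Bpos by (simp add: divide_le_eq)
  then show "a + pi / B \<le> k" by simp
  show "k \<le> \<bar>a\<bar> + 2 * B / (pi * r)"
  proof (cases "k \<le> \<bar>a\<bar>")
    case True
    then show ?thesis using Bpos r by (simp add: add_increasing2)
  next
    case False
    then have "k > 0" "k - a \<le> 2 * k" by auto
    then have "pi * r * k / 2 = pi * (r * k\<^sup>2) / (2 * k)" by (simp add: power2_eq_square)
    also have "\<dots> \<le> pi * (r * k\<^sup>2) / (k - a)"
      using r k \<open>k - a \<le> 2 * k\<close> by (intro divide_left_mono) auto
    also have "\<dots> \<le> J0 a r k" unfolding J0_def using k by (intro divide_right_mono) auto
    finally have "pi * r * k \<le> 2 * B" using B by linarith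
    then have "k \<le> 2 * B / (pi * r)" using r by (simp add: le_divide_eq mult.commute)
    then show ?thesis using abs_ge_zero[of a] by linarith
  qed
qed

lemma J_T_le:
  assumes "T \<ge> 0" "a < k" "\<bar>k\<bar> * T < 1" "r \<ge> 0"
  shows "J_T a r T k \<le> J0 a r k / (1 - \<bar>k\<bar> * T)\<^sup>2"
proof -
  have "J_T a r T k \<le> (1 + r * k\<^sup>2) * (pi / ((1 - \<bar>k\<bar> * T)\<^sup>2 * (k - a)))"
    unfolding J_T_def using assms by (intro mult_left_mono f_aT_le) auto
  then show ?thesis by (simp add: J0_def field_simps)
qed

lemma J_T_ge:
  assumes T: "T > 0" "\<bar>a\<bar> * T < 1" and k: "a < k" "k < k_u a T" and r: "r \<ge> 0"
  shows "J0 a r k / (1 + \<bar>k\<bar> * T)\<^sup>2 \<le> J_T a r T k"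
proof -
  have "(1 + r * k\<^sup>2) * (pi / ((1 + \<bar>k\<bar> * T)\<^sup>2 * (k - a))) \<le> J_T a r T k"
    unfolding J_T_def using T k r
    by (intro mult_left_mono f_aT_ge Delta_nonzero integrable_inverse_norm_Delta_sq) auto
  then show ?thesis by (simp add: J0_def field_simps)
qed

text \<open>On the whole stability interval \<open>\<bar>k\<bar> T < 1 + pi\<close>, because \<open>k_u T \<le> \<bar>a\<bar> T + pi\<close>;
  hence \<open>(1 + \<bar>k\<bar> T)\<^sup>2 < 36\<close>.\<close>
lemma J0_le_36_J_T:
  assumes T: "T > 0" "\<bar>a\<bar> * T < 1" and k: "a < k" "k < k_u a T" and r: "r \<ge> 0"
  shows "J0 a r k \<le> 36 * J_T a r T k"
proof -
  have "\<bar>k\<bar> * T < 1 + pi"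
  proof (cases "k < 0")
    case True
    then have "\<bar>k\<bar> * T \<le> \<bar>a\<bar> * T" using k T by (intro mult_right_mono) auto
    then show ?thesis using T pi_gt_zero by linarith
  next
    case False
    then have "\<bar>k\<bar> * T \<le> k_u a T * T" using k T by (intro mult_right_mono) auto
    then show ?thesis using k_u_le[OF T] T by linarith
  qed
  then have "(1 + \<bar>k\<bar> * T)\<^sup>2 \<le> 6\<^sup>2" using pi_less_4 T by (intro power_mono) auto
  moreover have "0 < 1 + \<bar>k\<bar> * T" using T by (simp add: add_pos_nonneg)
  ultimately have "J0 a r k / 36 \<le> J0 a r k / (1 + \<bar>k\<bar> * T)\<^sup>2"
    using J0_pos[OF r k(1)] by (intro divide_left_mono) auto
  with J_T_ge[OF T k r] show ?thesis by linarith
qed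

lemma J0_le_of_J_T_le:
  assumes T: "T > 0" "\<bar>a\<bar> * T < 1" and k: "a < k" "k < k_u a T" "\<bar>k\<bar> \<le> V"
    and k': "a < k'" "\<bar>k'\<bar> \<le> V" and VT: "V * T < 1"
    and le: "J_T a r T k \<le> J_T a r T k'" and r: "r \<ge> 0"
  shows "J0 a r k \<le> ((1 + V * T) / (1 - V * T))\<^sup>2 * J0 a r k'"
proof -
  have kT: "\<bar>k\<bar> * T \<le> V * T" and k'T: "\<bar>k'\<bar> * T \<le> V * T"
    using k(3) k'(2) T by (auto intro: mult_right_mono)
  have pos: "0 < (1 + \<bar>k\<bar> * T)\<^sup>2" using T by (intro zero_less_power add_pos_nonneg) auto
  have "J0 a r k \<le> (1 + \<bar>k\<bar> * T)\<^sup>2 * J_T a r T k"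
    using J_T_ge[OF T k(1,2) r] pos by (simp add: divide_le_eq mult.commute)
  also have "\<dots> \<le> (1 + V * T)\<^sup>2 * J_T a r T k'"
  proof (rule mult_mono[OF power_mono le])
    show "1 + \<bar>k\<bar> * T \<le> 1 + V * T" "0 \<le> 1 + \<bar>k\<bar> * T" using kT T by auto
    have "0 \<le> J0 a r k / (1 + \<bar>k\<bar> * T)\<^sup>2" using J0_pos[OF r k(1)] by simp
    then show "0 \<le> J_T a r T k" using J_T_ge[OF T k(1,2) r] by linarith
  qed simp
  also have "\<dots> \<le> (1 + V * T)\<^sup>2 * (J0 a r k' / (1 - \<bar>k'\<bar> * T)\<^sup>2)"
  proof (intro mult_left_mono J_T_le)
    show "\<bar>k'\<bar> * T < 1" using k'T VT by linarith
  qed (use k'(1) T r in auto)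
  also have "\<dots> \<le> (1 + V * T)\<^sup>2 * (J0 a r k' / (1 - V * T)\<^sup>2)"
    using k'T VT J0_pos[OF r k'(1)] by (intro mult_left_mono divide_left_mono power_mono mult_pos_pos) auto
  finally show ?thesis by (simp add: power_divide)
qed

lemma ex_min_if_dominated_outside:
  fixes g :: "real \<Rightarrow> real"
  assumes sub: "{L..U} \<subseteq> I" and x: "x \<in> {L..U}" and cont: "continuous_on {L..U} g"
    and outside: "\<And>k. k \<in> I \<Longrightarrow> k \<notin> {L..U} \<Longrightarrow> g x \<le> g k"
  shows "\<exists>k\<in>I. \<forall>k'\<in>I. g k \<le> g k'"
proof -
  obtain k where k: "k \<in> {L..U}" and min: "\<And>k'. k' \<in> {L..U} \<Longrightarrow> g k \<le> g k'"
    using continuous_attains_inf[OF compact_Icc _ cont] x by blast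
  have "g k \<le> g k'" if "k' \<in> I" for k'
    using min[of k'] min[OF x] outside[OF that] by (cases "k' \<in> {L..U}") auto
  with k sub show ?thesis by blast
qed

lemma J_T_le_4_J0:
  assumes "T \<ge> 0" "a < k" "\<bar>k\<bar> * T \<le> 1 / 2" "r \<ge> 0"
  shows "J_T a r T k \<le> 4 * J0 a r k"
proof -
  have "J_T a r T k \<le> J0 a r k / (1 - \<bar>k\<bar> * T)\<^sup>2" using assms by (intro J_T_le) auto
  also have "\<dots> \<le> J0 a r k / (1 / 2)\<^sup>2"
    using assms J0_pos[of r a k] by (intro divide_left_mono power_mono mult_pos_pos) auto
  finally show ?thesis by (simp add: field_simps)
qed

lemma J_T_sublevel:
  assumes r: "r > 0" and T: "T > 0" "\<bar>a\<bar> * T < 1" and k: "a < k" "k < k_u a T"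
    and C: "J_T a r T k \<le> C"
  shows "a + pi / (36 * C) \<le> k" "k \<le> \<bar>a\<bar> + 2 * (36 * C) / (pi * r)"
proof -
  have "J0 a r k \<le> 36 * C" using J0_le_36_J_T[OF T k less_imp_le[OF r]] C by linarith
  then show "a + pi / (36 * C) \<le> k" "k \<le> \<bar>a\<bar> + 2 * (36 * C) / (pi * r)"
    by (rule J0_sublevel[OF r k(1)])+
qed

lemma small_delay_bounds:
  assumes T: "T > 0" "(\<bar>a\<bar> + U) * T \<le> 1 / 2" and U: "U \<ge> 0"
  shows "\<bar>a\<bar> * T < 1" "U < k_u a T" "\<And>k. a < k \<Longrightarrow> k \<le> U \<Longrightarrow> \<bar>k\<bar> * T \<le> 1 / 2"
proof -
  have "0 \<le> U * T" "0 \<le> \<bar>a\<bar> * T" "\<bar>a\<bar> * T + U * T \<le> 1 / 2"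
    using T U by (auto simp: distrib_right)
  then have aT: "\<bar>a\<bar> * T < 1" and "U * T < 1" by linarith+
  show "\<bar>a\<bar> * T < 1" by (rule aT)
  have "U < 1 / T" using \<open>U * T < 1\<close> T by (simp add: less_divide_eq)
  then show "U < k_u a T" using k_u_ge[OF T(1) aT] by linarith
  fix k assume "a < k" "k \<le> U"
  then have "\<bar>k\<bar> \<le> \<bar>a\<bar> + U" using U by auto
  then show "\<bar>k\<bar> * T \<le> 1 / 2" using T by (meson mult_right_mono less_imp_le order.trans)
qed

definition localizing_window :: "real \<Rightarrow> real \<Rightarrow> real \<Rightarrow> real \<Rightarrow> real \<Rightarrow> bool" where
  "localizing_window a r T L U \<longleftrightarrow> 0 < T \<and> (\<bar>a\<bar> + U) * T \<le> 1 / 2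
     \<and> continuous_on {L..U} (J_T a r T)
     \<and> (\<forall>k\<in>{a<..<k_u a T}. J_T a r T k \<le> J_T a r T (kopt0 a r) \<longrightarrow> k \<in> {L..U})"

lemma eventually_localizing_window:
  assumes r: "r > 0"
  obtains L U where "a < L" "L \<le> kopt0 a r" "kopt0 a r \<le> U"
    and "\<forall>\<^sub>F T in at_right 0. localizing_window a r T L U"
proof -
  let ?k0 = "kopt0 a r"
  define C where "C = 4 * J0 a r ?k0"
  define L where "L = a + pi / (36 * C)"
  define U where "U = \<bar>a\<bar> + 2 * (36 * C) / (pi * r)"
  have C: "C > 0" using J0_pos kopt0_gt r by (simp add: C_def)
  then have "a < L" "U \<ge> 0" using r by (simp_all add: L_def U_def)
  have "J0 a r ?k0 \<le> 36 * C" using C by (simp add: C_def)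
  then have k0: "?k0 \<in> {L..U}"
    unfolding L_def U_def atLeastAtMost_iff by (intro conjI J0_sublevel[OF r kopt0_gt[OF r, of a]])
  have window: "localizing_window a r T L U" if T: "0 < T" "(\<bar>a\<bar> + U) * T \<le> 1 / 2" for T
    unfolding localizing_window_def
  proof (intro conjI ballI impI T)
    note small_delay = small_delay_bounds[OF T \<open>U \<ge> 0\<close>]
    show "continuous_on {L..U} (J_T a r T)"
      using T \<open>a < L\<close> small_delay(3) by (intro continuous_on_J_T) auto
    fix k assume k: "k \<in> {a<..<k_u a T}" "J_T a r T k \<le> J_T a r T ?k0"
    have "J_T a r T k \<le> C"
      using k(2) J_T_le_4_J0[of T a ?k0 r] T small_delay(3)[of ?k0] k0 kopt0_gt[OF r] r
      by (simp add: C_def)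
    then show "k \<in> {L..U}" using J_T_sublevel[OF r T(1) small_delay(1)] k by (auto simp: L_def U_def)
  qed
  have "\<forall>\<^sub>F T in at_right 0. (\<bar>a\<bar> + U) * T < 1 / 2"
    by (rule order_tendstoD(2)[of _ 0]) (auto intro!: tendsto_eq_intros)
  with eventually_at_right_less[of 0]
  have "\<forall>\<^sub>F T in at_right 0. localizing_window a r T L U"
    by eventually_elim (auto intro: window)
  with \<open>a < L\<close> k0 show thesis by (intro that) auto
qed

lemma tendsto_kopt0_if_J0_tendsto:
  assumes r: "r > 0" and ev: "\<forall>\<^sub>F x in F. a < k x \<and> k x \<le> U"
    and lim: "((\<lambda>x. J0 a r (k x)) \<longlongrightarrow> J0 a r (kopt0 a r)) F"
  shows "(k \<longlongrightarrow> kopt0 a r) F"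
proof -
  let ?k0 = "kopt0 a r"
  have upper_lim: "((\<lambda>x. (J0 a r (k x) - J0 a r ?k0) * ((U - a) / (pi * r))) \<longlongrightarrow> 0) F"
    using tendsto_mult_left_zero[OF LIM_zero[OF lim]] .
  have upper: "\<forall>\<^sub>F x in F. (k x - ?k0)\<^sup>2 \<le> (J0 a r (k x) - J0 a r ?k0) * ((U - a) / (pi * r))"
    using ev
  proof eventually_elim
    case (elim x)
    then have "(J0 a r (k x) - J0 a r ?k0) * ((k x - a) / (pi * r))
        = pi * r * (k x - ?k0)\<^sup>2 / (k x - a) * ((k x - a) / (pi * r))"
      by (simp only: J0_minus_J0_kopt0[OF r])
    also have "\<dots> = (k x - ?k0)\<^sup>2" using elim r by simp
    finally have "(k x - ?k0)\<^sup>2 = (J0 a r (k x) - J0 a r ?k0) * ((k x - a) / (pi * r))" ..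
    also have "\<dots> \<le> (J0 a r (k x) - J0 a r ?k0) * ((U - a) / (pi * r))"
      using elim J0_kopt0_le[OF r, of a "k x"] r by (intro mult_left_mono divide_right_mono) auto
    finally show ?case .
  qed
  have "((\<lambda>x. (k x - ?k0)\<^sup>2) \<longlongrightarrow> 0) F"
    by (rule tendsto_sandwich[OF _ upper tendsto_const upper_lim]) simp
  then show ?thesis by (simp add: LIM_zero_iff)
qed

lemma is_kopt_tendsto_kopt0:
  assumes r: "r > 0" and kopt: "\<forall>\<^sub>F T in at_right 0. is_kopt a r T (kopt T)"
  shows "(kopt \<longlongrightarrow> kopt0 a r) (at_right 0)"
proof -
  let ?k0 = "kopt0 a r"
  obtain L U where LU: "a < L" "L \<le> ?k0" "?k0 \<le> U"
    and loc: "\<forall>\<^sub>F T in at_right 0. localizing_window a r T L U"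
    by (rule eventually_localizing_window[OF r])
  have "U \<ge> 0" using LU kopt0_pos[OF r, of a] by linarith
  define V where "V = \<bar>a\<bar> + U"
  have bounds: "\<forall>\<^sub>F T in at_right 0. a < kopt T \<and> kopt T \<le> U
      \<and> J0 a r (kopt T) \<le> ((1 + V * T) / (1 - V * T))\<^sup>2 * J0 a r ?k0"
    using loc kopt
  proof eventually_elim
    case (elim T)
    then have T: "0 < T" "(\<bar>a\<bar> + U) * T \<le> 1 / 2" by (simp_all add: localizing_window_def)
    note small_delay = small_delay_bounds[OF T \<open>U \<ge> 0\<close>]
    have k0: "?k0 \<in> {a<..<k_u a T}" using LU small_delay(2) kopt0_gt[OF r] by auto
    have k: "kopt T \<in> {a<..<k_u a T}" "J_T a r T (kopt T) \<le> J_T a r T ?k0"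
      using elim k0 by (auto simp: is_kopt_def)
    then have "kopt T \<in> {L..U}" using elim by (auto simp: localizing_window_def)
    moreover have "J0 a r (kopt T) \<le> ((1 + V * T) / (1 - V * T))\<^sup>2 * J0 a r ?k0"
      using k k0 T small_delay(1) r \<open>kopt T \<in> {L..U}\<close> LU kopt0_pos[OF r, of a]
      by (intro J0_le_of_J_T_le) (auto simp: V_def)
    ultimately show ?case using LU by auto
  qed
  have upper_lim: "((\<lambda>T. ((1 + V * T) / (1 - V * T))\<^sup>2 * J0 a r ?k0) \<longlongrightarrow> J0 a r ?k0) (at_right 0)"
    by (auto intro!: tendsto_eq_intros)
  have lower: "\<forall>\<^sub>F T in at_right 0. J0 a r ?k0 \<le> J0 a r (kopt T)"
    using bounds by (rule eventually_mono) (auto intro: J0_kopt0_le[OF r])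
  have upper: "\<forall>\<^sub>F T in at_right 0. J0 a r (kopt T) \<le> ((1 + V * T) / (1 - V * T))\<^sup>2 * J0 a r ?k0"
    using bounds by (rule eventually_mono) blast
  have "\<forall>\<^sub>F T in at_right 0. a < kopt T \<and> kopt T \<le> U"
    using bounds by (rule eventually_mono) blast
  then show ?thesis
    using tendsto_kopt0_if_J0_tendsto[OF r _ tendsto_sandwich[OF lower upper tendsto_const upper_lim]]
    by blast
qed

lemma eventually_is_kopt_exists:
  assumes r: "r > 0"
  shows "\<forall>\<^sub>F T in at_right 0. \<exists>k. is_kopt a r T k"
proof -
  obtain L U where LU: "a < L" "L \<le> kopt0 a r" "kopt0 a r \<le> U"
    and loc: "\<forall>\<^sub>F T in at_right 0. localizing_window a r T L U"
    by (rule eventually_localizing_window[OF r])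
  have "U \<ge> 0" using LU kopt0_pos[OF r, of a] by linarith
  show ?thesis
    using loc
  proof eventually_elim
    case (elim T)
    then have "U < k_u a T"
      using small_delay_bounds(2)[OF _ _ \<open>U \<ge> 0\<close>] by (auto simp: localizing_window_def)
    have "\<exists>k\<in>{a<..<k_u a T}. \<forall>k'\<in>{a<..<k_u a T}. J_T a r T k \<le> J_T a r T k'"
    proof (rule ex_min_if_dominated_outside[of L U _ "kopt0 a r"])
      show "{L..U} \<subseteq> {a<..<k_u a T}" "kopt0 a r \<in> {L..U}" "continuous_on {L..U} (J_T a r T)"
        using LU elim \<open>U < k_u a T\<close> by (auto simp: localizing_window_def)
      fix k assume "k \<in> {a<..<k_u a T}" "k \<notin> {L..U}"
      then have "\<not> J_T a r T k \<le> J_T a r T (kopt0 a r)" using elim by (auto simp: localizing_window_def)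
      then show "J_T a r T (kopt0 a r) \<le> J_T a r T k" by simp
    qed
    then show ?case by (auto simp: is_kopt_def)
  qed
qed

theorem proposition5:
  fixes a r :: real
  assumes "r > 0"
  defines "k0 \<equiv> a + sqrt (a\<^sup>2 + 1 / r)"
  shows "(\<forall>\<^sub>F T in at_right 0. \<exists>k. is_kopt a r T k) \<and>
         (\<forall>kopt :: real \<Rightarrow> real.
            (\<forall>\<^sub>F T in at_right 0. is_kopt a r T (kopt T)) \<longrightarrow>
            ((\<lambda>T. kopt T / (k0 - (a * k0 + 1 / r) * T)) \<longlongrightarrow> 1) (at_right 0))"
proof (intro conjI allI impI)
  show "\<forall>\<^sub>F T in at_right 0. \<exists>k. is_kopt a r T k"
    using eventually_is_kopt_exists[OF \<open>r > 0\<close>] .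
  fix kopt assume "\<forall>\<^sub>F T in at_right 0. is_kopt a r T (kopt T)"
  then have "(kopt \<longlongrightarrow> k0) (at_right 0)"
    using is_kopt_tendsto_kopt0[OF \<open>r > 0\<close>] by (simp add: k0_def kopt0_def)
  moreover have "((\<lambda>T. k0 - (a * k0 + 1 / r) * T) \<longlongrightarrow> k0) (at_right 0)"
    by (auto intro!: tendsto_eq_intros)
  moreover have "k0 \<noteq> 0" using kopt0_pos[OF \<open>r > 0\<close>, of a] by (simp add: k0_def kopt0_def)
  ultimately have "((\<lambda>T. kopt T / (k0 - (a * k0 + 1 / r) * T)) \<longlongrightarrow> k0 / k0) (at_right 0)"
    by (intro tendsto_divide)
  then show "((\<lambda>T. kopt T / (k0 - (a * k0 + 1 / r) * T)) \<longlongrightarrow> 1) (at_right 0)"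
    using \<open>k0 \<noteq> 0\<close> by simp
qed

end
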